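(* Let $H$ be a $k$-gate. If $H$ is an induced subgraph of a graph $G$, then $H$ is an induced subgraph of some atom of $G$.
   Context: All graphs are finite and simple. A clique is a maximal complete set of vertices. A clique $C$ of a connected graph $H$ is a separator if $H-C$ (the subgraph induced by $V(H)\setminus C$) is disconnected; an atom is a connected graph with no clique separator. The atoms of a graph $G$ are the graphs obtained by the decomposition of $G$ by clique separators: $G$ is progressively decomposed along clique separators into a clique decomposition tree whose leaves correspond to atoms; equivalently, the atoms of $G$ are the maximal connected induced subgraphs of $G$ having no clique separator. Gates are defined recursively: (i) every chordless cycle $C_n$ with $n\geq 4$ is a gate; (ii) if $H'$ is a gate, $C$ and $C'$ are disjoint cliques of $H'$, and $P=(v_1,\dots,v_l)$ with $l\geq 2$ is a chordless path vertex-disjoint from $H'$, then the union of $H'$ and $P$ together with all edges between $v_1$ and the vertices of $C$ and all edges between $v_l$ and the vertices of $C'$ is a gate; (iii) there are no other gates. A $k$-gate is a gate with exactly $k$ cliques. *)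

theory Defs
  imports Main
begin

type_synonym 'a graph = "'a set \<times> 'a set set"

definition graph :: "'a graph \<Rightarrow> bool" where
  "graph G \<longleftrightarrow> finite (fst G) \<and> (\<forall>e\<in>snd G. e \<subseteq> fst G \<and> card e = 2)"

definition induced :: "'a graph \<Rightarrow> 'a set \<Rightarrow> 'a graph" where
  "induced G S = (S, {e \<in> snd G. e \<subseteq> S})"

definition induced_subgraph :: "'a graph \<Rightarrow> 'a graph \<Rightarrow> bool" where
  "induced_subgraph H G \<longleftrightarrow> fst H \<subseteq> fst G \<and> snd H = {e \<in> snd G. e \<subseteq> fst H}"

definition complete_set :: "'a graph \<Rightarrow> 'a set \<Rightarrow> bool" where
  "complete_set G S \<longleftrightarrow> S \<subseteq> fst G \<and> (\<forall>u\<in>S. \<forall>v\<in>S. u \<noteq> v \<longrightarrow> {u, v} \<in> snd G)"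

definition clique :: "'a graph \<Rightarrow> 'a set \<Rightarrow> bool" where
  "clique G C \<longleftrightarrow> complete_set G C \<and> (\<forall>D. C \<subset> D \<longrightarrow> \<not> complete_set G D)"

definition connected_graph :: "'a graph \<Rightarrow> bool" where
  "connected_graph G \<longleftrightarrow> fst G \<noteq> {} \<and>
     (\<forall>u\<in>fst G. \<forall>v\<in>fst G. (u, v) \<in> {(x, y). {x, y} \<in> snd G}\<^sup>*)"

definition disconnected_graph :: "'a graph \<Rightarrow> bool" where
  "disconnected_graph G \<longleftrightarrow> fst G \<noteq> {} \<and> \<not> connected_graph G"

definition clique_separator :: "'a graph \<Rightarrow> 'a set \<Rightarrow> bool" where
  "clique_separator H C \<longleftrightarrow> clique H C \<and> disconnected_graph (induced H (fst H - C))"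

definition atom :: "'a graph \<Rightarrow> bool" where
  "atom H \<longleftrightarrow> connected_graph H \<and> \<not> (\<exists>C. clique_separator H C)"

definition atom_of :: "'a graph \<Rightarrow> 'a set \<Rightarrow> bool" where
  "atom_of G A \<longleftrightarrow> A \<subseteq> fst G \<and> atom (induced G A) \<and>
     (\<forall>B. A \<subset> B \<and> B \<subseteq> fst G \<longrightarrow> \<not> atom (induced G B))"

inductive gate :: "'a graph \<Rightarrow> bool" where
  cycle: "\<lbrakk> length xs \<ge> 4; distinct xs;
            E = {{xs ! i, xs ! ((i + 1) mod length xs)} | i. i < length xs} \<rbrakk>
          \<Longrightarrow> gate (set xs, E)"
| extend: "\<lbrakk> gate (V, E); clique (V, E) C; clique (V, E) C'; C \<inter> C' = {};
             distinct ps; length ps \<ge> 2; set ps \<inter> V = {};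
             E' = E \<union> {{ps ! i, ps ! (i + 1)} | i. i + 1 < length ps}
                    \<union> {{hd ps, c} | c. c \<in> C} \<union> {{last ps, c} | c. c \<in> C'} \<rbrakk>
          \<Longrightarrow> gate (V \<union> set ps, E')"

definition k_gate :: "nat \<Rightarrow> 'a graph \<Rightarrow> bool" where
  "k_gate k H \<longleftrightarrow> gate H \<and> card {C. clique H C} = k"

end

theory Submission
  imports Defs
begin

text \<open>Every gate is an atom. By induction on the construction of a gate one shows the stronger
  invariant that the gate is connected and stays connected after deleting any clique. In a
  chordless cycle the cliques are the edges, and deleting an edge leaves a path. When a path P
  is attached to disjoint cliques C and C' of a gate H', a clique K of the new graph is either a
  clique of H' other than C (so H' - K is connected and P is still attached through a vertex of
  C - K), or an edge of P (the two remaining pieces of P hang on C and C'), or C together with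
  the first vertex of P (then the rest of P hangs on C'), or symmetrically C' with the last
  vertex. Finally, the vertex set of an induced copy of a gate extends, by finiteness, to a
  maximal vertex set inducing an atom, that is, to an atom of G.\<close>

section \<open>Paths and connected vertex sets\<close>

lemma successively_take: "successively P xs \<Longrightarrow> successively P (take n xs)"
  by (metis append_take_drop_id successively_append_iff)

lemma successively_drop: "successively P xs \<Longrightarrow> successively P (drop n xs)"
  by (metis append_take_drop_id successively_append_iff)

lemma set_tl_distinct: "distinct xs \<Longrightarrow> set (tl xs) = set xs - {hd xs}"
  by (cases xs) auto

lemma set_butlast_distinct: "distinct xs \<Longrightarrow> set (butlast xs) = set xs - {last xs}"
  by (cases xs rule: rev_exhaust) auto

lemma set_remove_adjacent_distinct:
  assumes "distinct xs" and "Suc a < length xs"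
  shows "set xs - {xs ! a, xs ! Suc a} = set (take a xs) \<union> set (drop (Suc (Suc a)) xs)"
proof -
  have split: "set xs - {x, y} = set ys \<union> set zs" if "xs = ys @ x # y # zs" for ys x y zs
    using that assms(1) by auto
  show ?thesis
    using assms(2) by (intro split) (simp add: Cons_nth_drop_Suc)
qed

definition connected_in :: "'a set set \<Rightarrow> 'a set \<Rightarrow> bool" where
  "connected_in E S \<longleftrightarrow> connected_graph (S, {e \<in> E. e \<subseteq> S})"

definition adjacent_in :: "'a set set \<Rightarrow> 'a set \<Rightarrow> ('a \<times> 'a) set" where
  "adjacent_in E S = {(x, y). {x, y} \<in> E \<and> x \<in> S \<and> y \<in> S}"

lemma connected_in_iff:
  "connected_in E S \<longleftrightarrow> S \<noteq> {} \<and> (\<forall>u\<in>S. \<forall>v\<in>S. (u, v) \<in> (adjacent_in E S)\<^sup>*)"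
  unfolding connected_in_def connected_graph_def adjacent_in_def by simp

lemma adjacent_in_mono: "E \<subseteq> E' \<Longrightarrow> S \<subseteq> S' \<Longrightarrow> (adjacent_in E S)\<^sup>* \<subseteq> (adjacent_in E' S')\<^sup>*"
  by (rule rtrancl_mono) (auto simp: adjacent_in_def)

lemma connected_inI:
  assumes "r \<in> S" and "\<And>u. u \<in> S \<Longrightarrow> (r, u) \<in> (adjacent_in E S)\<^sup>*"
  shows "connected_in E S"
proof -
  have "sym ((adjacent_in E S)\<^sup>*)"
    by (intro sym_rtrancl) (auto simp: sym_def adjacent_in_def insert_commute)
  then show ?thesis
    using assms unfolding connected_in_iff by (meson empty_iff rtrancl_trans symD)
qed

lemma connected_in_mono: "connected_in E S \<Longrightarrow> E \<subseteq> E' \<Longrightarrow> connected_in E' S"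
  unfolding connected_in_iff using adjacent_in_mono[of E E' S S] by blast

lemma connected_in_Un_edge:
  assumes A: "connected_in E A" and B: "connected_in E B"
    and "a \<in> A" and "b \<in> B" and "{a, b} \<in> E"
  shows "connected_in E (A \<union> B)"
proof (rule connected_inI)
  show "a \<in> A \<union> B" using \<open>a \<in> A\<close> by simp
  have ab: "(a, b) \<in> adjacent_in E (A \<union> B)"
    using assms(3-5) by (simp add: adjacent_in_def)
  fix u assume "u \<in> A \<union> B"
  then show "(a, u) \<in> (adjacent_in E (A \<union> B))\<^sup>*"
  proof
    assume "u \<in> A"
    then show ?thesis
      using A \<open>a \<in> A\<close> adjacent_in_mono[of E E A "A \<union> B"] unfolding connected_in_iff by blast
  next
    assume "u \<in> B"
    then have "(b, u) \<in> (adjacent_in E (A \<union> B))\<^sup>*"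
      using B \<open>b \<in> B\<close> adjacent_in_mono[of E E B "A \<union> B"] unfolding connected_in_iff by blast
    then show ?thesis by (rule converse_rtrancl_into_rtrancl[OF ab])
  qed
qed

lemma connected_in_singleton: "connected_in E {x}"
  by (rule connected_inI[of x]) auto

lemma connected_in_path:
  assumes "successively (\<lambda>x y. {x, y} \<in> E) xs" and "xs \<noteq> []"
  shows "connected_in E (set xs)"
  using assms
proof (induction xs rule: induct_list012)
  case (3 x y zs)
  have "connected_in E ({x} \<union> set (y # zs))"
    using 3 by (intro connected_in_Un_edge[of E _ _ x y] connected_in_singleton) auto
  then show ?case by (simp add: insert_commute)
qed (simp_all add: connected_in_singleton)

lemma connected_in_Un_path:
  assumes "connected_in E S" and "successively (\<lambda>x y. {x, y} \<in> E) xs"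
    and "xs \<noteq> [] \<Longrightarrow> \<exists>s\<in>S. \<exists>x\<in>set xs. {s, x} \<in> E"
  shows "connected_in E (S \<union> set xs)"
proof (cases "xs = []")
  case False
  then show ?thesis
    using assms connected_in_path connected_in_Un_edge by metis
qed (use assms in simp)

section \<open>Cliques\<close>

lemma clique_nonempty: "clique G K \<Longrightarrow> v \<in> fst G \<Longrightarrow> K \<noteq> {}"
proof
  assume "clique G K" "v \<in> fst G" "K = {}"
  moreover have "complete_set G {v}" using \<open>v \<in> fst G\<close> unfolding complete_set_def by simp
  ultimately show False unfolding clique_def by blast
qed

lemma clique_eq_if_subset: "clique G K \<Longrightarrow> K \<subseteq> D \<Longrightarrow> complete_set G D \<Longrightarrow> K = D"
  unfolding clique_def by blast

lemma clique_adjacent: "clique G K \<Longrightarrow> u \<in> K \<Longrightarrow> v \<in> K \<Longrightarrow> u \<noteq> v \<Longrightarrow> {u, v} \<in> snd G"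
  by (simp add: clique_def complete_set_def)

lemma clique_subset: "clique G K \<Longrightarrow> K \<subseteq> fst G"
  by (simp add: clique_def complete_set_def)

lemma clique_not_singleton:
  assumes K: "clique G K" and "v \<in> K" and "w \<in> fst G" "w \<noteq> v" "{v, w} \<in> snd G"
  shows "\<exists>u\<in>K. u \<noteq> v"
proof (rule ccontr)
  assume "\<not> ?thesis"
  then have "K = {v}" using \<open>v \<in> K\<close> by blast
  have "complete_set G {v, w}"
    using assms clique_subset[OF K] unfolding complete_set_def by (auto simp: insert_commute)
  then show False using clique_eq_if_subset[OF K, of "{v, w}"] \<open>K = {v}\<close> \<open>w \<noteq> v\<close> by auto
qed

lemma clique_in_edges_if_triangle_free:
  assumes K: "clique (V, E) K"
    and no_isolated: "\<And>v. v \<in> V \<Longrightarrow> \<exists>w\<in>V. w \<noteq> v \<and> {v, w} \<in> E"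
    and triangle_free: "\<And>x y z. \<lbrakk>x \<noteq> y; y \<noteq> z; x \<noteq> z; {x, y} \<in> E; {y, z} \<in> E; {x, z} \<in> E\<rbrakk> \<Longrightarrow> False"
    and "V \<noteq> {}"
  shows "K \<in> E"
proof -
  have Kc: "complete_set (V, E) K" using K unfolding clique_def by blast
  obtain x where x: "x \<in> K" using clique_nonempty[OF K] \<open>V \<noteq> {}\<close> by fastforce
  have xV: "x \<in> V" using Kc x unfolding complete_set_def by auto
  obtain w where "w \<in> V" "w \<noteq> x" "{x, w} \<in> E" using no_isolated[OF xV] by blast
  then obtain y where y: "y \<in> K" "y \<noteq> x" using clique_not_singleton[OF K x] by auto
  have "K = {x, y}"
  proof (intro equalityI subsetI)
    fix z assume "z \<in> K"
    then show "z \<in> {x, y}"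
      using Kc x y triangle_free[of x y z] unfolding complete_set_def by auto
  qed (use x y in auto)
  then show "K \<in> E" using Kc x y unfolding complete_set_def by auto
qed

definition clique_robust :: "'a graph \<Rightarrow> bool" where
  "clique_robust G \<longleftrightarrow> (\<forall>e\<in>snd G. e \<subseteq> fst G) \<and> connected_in (snd G) (fst G) \<and>
     (\<forall>K. clique G K \<longrightarrow> connected_in (snd G) (fst G - K))"

lemma atom_if_clique_robust: "clique_robust G \<Longrightarrow> atom G"
proof -
  assume G: "clique_robust G"
  then have "{e \<in> snd G. e \<subseteq> fst G} = snd G"
    unfolding clique_robust_def by auto
  then have "connected_graph G"
    using G unfolding clique_robust_def connected_in_def by simp
  moreover have "\<not> clique_separator G K" for K
    using G unfolding clique_robust_def clique_separator_def disconnected_graph_def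
      connected_in_def induced_def by auto
  ultimately show "atom G" unfolding atom_def by blast
qed

section \<open>Chordless cycles\<close>

lemma Suc_mod_eq_if: "a < n \<Longrightarrow> Suc a mod n = (if Suc a < n then Suc a else 0)"
  by (metis Suc_lessI mod_less mod_self)

lemma no_triangle_mod:
  assumes "4 \<le> n" and "a < n" "b < n" "c < n" and "a \<noteq> b" "b \<noteq> c" "a \<noteq> c"
    and "b = Suc a mod n \<or> a = Suc b mod n" "c = Suc b mod n \<or> b = Suc c mod n"
    "c = Suc a mod n \<or> a = Suc c mod n"
  shows False
  using assms Suc_mod_eq_if[of a n] Suc_mod_eq_if[of b n] Suc_mod_eq_if[of c n]
  by (auto split: if_splits)

locale cycle_graph =
  fixes xs :: "'a list" and E :: "'a set set"
  assumes cycle_edges: "E = {{xs ! i, xs ! ((i + 1) mod length xs)} | i. i < length xs}"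
begin

lemma successively_rotate_cycle: "successively (\<lambda>x y. {x, y} \<in> E) (rotate m xs)"
  unfolding successively_conv_nth
proof (intro allI impI)
  fix i assume i: "Suc i < length (rotate m xs)"
  define j where "j = (m + i) mod length xs"
  have "0 < length xs" using i length_rotate[of m xs] by linarith
  then have "j < length xs" "(j + 1) mod length xs = (m + Suc i) mod length xs"
    by (simp_all add: j_def mod_Suc_eq)
  then show "{rotate m xs ! i, rotate m xs ! Suc i} \<in> E"
    using i unfolding cycle_edges by (auto simp: nth_rotate j_def)
qed

lemma cycle_adjacent_iff:
  assumes "distinct xs" and a: "a < length xs" and b: "b < length xs"
  shows "{xs ! a, xs ! b} \<in> E \<longleftrightarrow> b = Suc a mod length xs \<or> a = Suc b mod length xs"
proof
  assume "{xs ! a, xs ! b} \<in> E"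
  then obtain i where i: "i < length xs" "{xs ! a, xs ! b} = {xs ! i, xs ! (Suc i mod length xs)}"
    unfolding cycle_edges by auto
  moreover have "Suc i mod length xs < length xs" using i(1) by (intro mod_less_divisor) linarith
  ultimately show "b = Suc a mod length xs \<or> a = Suc b mod length xs"
    using i a b nth_eq_iff_index_eq[OF \<open>distinct xs\<close>] by (auto simp: doubleton_eq_iff)
next
  assume "b = Suc a mod length xs \<or> a = Suc b mod length xs"
  then show "{xs ! a, xs ! b} \<in> E"
    unfolding cycle_edges using a b by (auto simp: insert_commute)
qed

lemma clique_robust_cycle:
  assumes n: "4 \<le> length xs" and dist: "distinct xs"
  shows "clique_robust (set xs, E)"
proof -
  let ?n = "length xs"
  have "xs \<noteq> []" and mod_less: "m mod ?n < ?n" for m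
    using n by (auto intro: mod_less_divisor)
  have index: "\<exists>a<?n. v = xs ! a" if "v \<in> set xs" for v
    using that by (auto simp: in_set_conv_nth)
  have edges: "\<forall>e\<in>E. e \<subseteq> set xs"
    unfolding cycle_edges using mod_less by auto
  have connected: "connected_in E (set xs)"
    using connected_in_path[OF successively_rotate_cycle[of 0]] \<open>xs \<noteq> []\<close> by simp
  have no_isolated: "\<exists>w\<in>set xs. w \<noteq> v \<and> {v, w} \<in> E" if v: "v \<in> set xs" for v
  proof -
    obtain a where a: "a < ?n" "v = xs ! a" using index[OF v] by blast
    then have "Suc a mod ?n \<noteq> a" "Suc a mod ?n < ?n"
      using n Suc_mod_eq_if[of a ?n] by auto
    then have "xs ! (Suc a mod ?n) \<noteq> v" "{v, xs ! (Suc a mod ?n)} \<in> E"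
      using a cycle_adjacent_iff[OF dist a(1)] by (auto simp: nth_eq_iff_index_eq[OF dist])
    then show ?thesis using mod_less by auto
  qed
  have triangle_free: False
    if "x \<noteq> y" "y \<noteq> z" "x \<noteq> z" "{x, y} \<in> E" "{y, z} \<in> E" "{x, z} \<in> E" for x y z
  proof -
    have "x \<in> set xs" "y \<in> set xs" "z \<in> set xs" using that edges by auto
    then obtain a b c where abc: "a < ?n" "b < ?n" "c < ?n" and "x = xs ! a" "y = xs ! b" "z = xs ! c"
      using index by meson
    with that have "a \<noteq> b" "b \<noteq> c" "a \<noteq> c"
      and "b = Suc a mod ?n \<or> a = Suc b mod ?n" "c = Suc b mod ?n \<or> b = Suc c mod ?n"
        "c = Suc a mod ?n \<or> a = Suc c mod ?n"
      using cycle_adjacent_iff[OF dist] by auto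
    then show False using no_triangle_mod[OF n abc] by blast
  qed
  have "connected_in E (set xs - K)" if K: "clique (set xs, E) K" for K
  proof -
    have "K \<in> E"
      by (rule clique_in_edges_if_triangle_free[OF K no_isolated]) (use triangle_free \<open>xs \<noteq> []\<close> in auto)
    then obtain i where i: "i < ?n" "K = {xs ! i, xs ! (Suc i mod ?n)}"
      unfolding cycle_edges by auto
    define ys where "ys = rotate i xs"
    have "0 < ?n" "1 < ?n" using n by linarith+
    then have "ys ! 0 = xs ! i" "ys ! 1 = xs ! (Suc i mod ?n)"
      using i(1) nth_rotate[of 0 xs i] nth_rotate[of 1 xs i] by (simp_all add: ys_def)
    then have "set xs - K = set (drop 2 ys)"
      using set_remove_adjacent_distinct[of ys 0] dist n i by (simp add: ys_def numeral_2_eq_2)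
    moreover have "drop 2 ys \<noteq> []" using n by (simp add: ys_def)
    ultimately show ?thesis
      using connected_in_path successively_drop successively_rotate_cycle ys_def by metis
  qed
  then show ?thesis
    unfolding clique_robust_def using edges connected by simp
qed

end

section \<open>Attaching a path to two disjoint cliques\<close>

locale gate_extension =
  fixes V :: "'a set" and E :: "'a set set" and C C' :: "'a set" and ps :: "'a list"
    and E' :: "'a set set"
  assumes robust: "clique_robust (V, E)"
    and C: "clique (V, E) C" and C': "clique (V, E) C'" and disjoint: "C \<inter> C' = {}"
    and distinct: "distinct ps" and length: "2 \<le> length ps" and fresh: "set ps \<inter> V = {}"
    and extended_edges: "E' = E \<union> {{ps ! i, ps ! (i + 1)} | i. i + 1 < length ps}
           \<union> {{hd ps, c} | c. c \<in> C} \<union> {{last ps, c} | c. c \<in> C'}"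
begin

lemma edges_subset_extended: "E \<subseteq> E'"
  using extended_edges by blast

lemma extended_path: "successively (\<lambda>x y. {x, y} \<in> E') ps"
  unfolding successively_conv_nth extended_edges by auto

lemma ps_ne: "ps \<noteq> []"
  using length by auto

lemma hd_ne_last: "hd ps \<noteq> last ps"
  using ps_ne length distinct by (simp add: hd_conv_nth last_conv_nth nth_eq_iff_index_eq)

lemma edges_in_V: "e \<in> E \<Longrightarrow> e \<subseteq> V"
  using robust unfolding clique_robust_def by auto

lemma V_ne: "V \<noteq> {}"
  using robust unfolding clique_robust_def connected_in_iff by auto

lemma ends_subset_nonempty: "C \<subseteq> V" "C \<noteq> {}" "C' \<subseteq> V" "C' \<noteq> {}"
proof -
  show "C \<subseteq> V" "C' \<subseteq> V" using C C' unfolding clique_def complete_set_def by simp_all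
  obtain v where "v \<in> V" using V_ne by blast
  then show "C \<noteq> {}" "C' \<noteq> {}" using clique_nonempty[OF C] clique_nonempty[OF C'] by simp_all
qed

lemma extended_adjacent_V:
  assumes "x \<in> V" and "y \<in> V"
  shows "{x, y} \<in> E' \<longleftrightarrow> {x, y} \<in> E"
proof -
  have outside: "v \<notin> {x, y}" if "v \<in> set ps" for v
    using that assms fresh by auto
  have "ps ! i \<in> set ps" if "i + 1 < length ps" for i
    using that by simp
  then have "{x, y} \<notin> {{ps ! i, ps ! (i + 1)} | i. i + 1 < length ps}"
    using outside by blast
  moreover have "{x, y} \<notin> {{hd ps, c} | c. c \<in> C}" "{x, y} \<notin> {{last ps, c} | c. c \<in> C'}"
    using outside[OF hd_in_set[OF ps_ne]] outside[OF last_in_set[OF ps_ne]] by blast+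
  ultimately show ?thesis unfolding extended_edges by blast
qed

lemma extended_adjacent_ps_V:
  assumes "x \<in> set ps" and "z \<in> V"
  shows "{x, z} \<in> E' \<longleftrightarrow> (x = hd ps \<and> z \<in> C) \<or> (x = last ps \<and> z \<in> C')"
proof -
  have "x \<notin> V" "z \<notin> set ps" using assms fresh by auto
  then have "{x, z} \<notin> E" "\<And>i. i + 1 < length ps \<Longrightarrow> {x, z} \<noteq> {ps ! i, ps ! (i + 1)}"
    using edges_in_V by (auto simp: doubleton_eq_iff)
  then show ?thesis
    using \<open>x \<notin> V\<close> ends_subset_nonempty unfolding extended_edges by (auto simp: doubleton_eq_iff)
qed

lemma extended_adjacent_ps:
  assumes "a < b" and "b < length ps"
  shows "{ps ! a, ps ! b} \<in> E' \<longleftrightarrow> b = Suc a"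
proof
  have "ps ! a \<in> set ps" "ps ! b \<in> set ps" using assms by simp_all
  then have "ps ! a \<notin> V" "ps ! b \<notin> V" using fresh by blast+
  moreover assume "{ps ! a, ps ! b} \<in> E'"
  ultimately obtain i where i: "i + 1 < length ps" "{ps ! a, ps ! b} = {ps ! i, ps ! (i + 1)}"
    using edges_in_V ends_subset_nonempty unfolding extended_edges by (auto simp: doubleton_eq_iff)
  have index: "ps ! j = ps ! k \<longleftrightarrow> j = k" if "j < length ps" "k < length ps" for j k
    using that distinct by (simp add: nth_eq_iff_index_eq)
  from i(2) have "(a = i \<and> b = i + 1) \<or> (a = i + 1 \<and> b = i)"
    unfolding doubleton_eq_iff using index assms i(1) by (metis add_lessD1 order.strict_trans)
  then show "b = Suc a" using assms(1) by auto
next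
  assume "b = Suc a"
  then have "{ps ! a, ps ! b} = {ps ! a, ps ! (a + 1)}" "a + 1 < length ps" using assms(2) by simp_all
  then show "{ps ! a, ps ! b} \<in> E'" unfolding extended_edges by blast
qed

lemma hd_adjacent: "c \<in> C \<Longrightarrow> {c, hd ps} \<in> E'"
  and last_adjacent: "c \<in> C' \<Longrightarrow> {c, last ps} \<in> E'"
  unfolding extended_edges by (simp_all add: insert_commute, blast+)

lemma complete_set_extended: "complete_set (V, E) D \<Longrightarrow> complete_set (V \<union> set ps, E') D"
  using edges_subset_extended unfolding complete_set_def by (simp add: subset_iff)

lemma complete_insert_end:
  assumes "clique (V, E) D" and "x \<in> set ps" and adjacent: "\<And>c. c \<in> D \<Longrightarrow> {c, x} \<in> E'"
  shows "complete_set (V \<union> set ps, E') (insert x D)"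
  using complete_set_extended[of D] assms(1,2) adjacent
  unfolding clique_def complete_set_def by (auto simp: insert_commute)

lemma complete_insert_hd: "complete_set (V \<union> set ps, E') (insert (hd ps) C)"
  and complete_insert_last: "complete_set (V \<union> set ps, E') (insert (last ps) C')"
  using complete_insert_end[OF C hd_in_set[OF ps_ne] hd_adjacent]
    complete_insert_end[OF C' last_in_set[OF ps_ne] last_adjacent] by simp_all

lemma connected_extended_V: "connected_in E' V"
  using robust connected_in_mono[OF _ edges_subset_extended] unfolding clique_robust_def by simp

lemma connected_extended_remove_clique_in_V:
  assumes K: "clique (V \<union> set ps, E') K" and "K \<subseteq> V"
  shows "connected_in E' (V \<union> set ps - K)"
proof -
  have complete: "complete_set (V, E) K"
    unfolding complete_set_def
  proof (intro conjI ballI impI)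
    fix u v assume "u \<in> K" "v \<in> K" "u \<noteq> v"
    then show "{u, v} \<in> snd (V, E)"
      using clique_adjacent[OF K, of u v] extended_adjacent_V[of u v] \<open>K \<subseteq> V\<close> by auto
  qed (use \<open>K \<subseteq> V\<close> in simp)
  have "\<not> complete_set (V, E) D" if "K \<subset> D" for D
    using K that complete_set_extended unfolding clique_def by blast
  with complete have "clique (V, E) K" unfolding clique_def by blast
  then have "connected_in E' (V - K)"
    using robust connected_in_mono[OF _ edges_subset_extended] unfolding clique_robust_def by simp
  moreover have "\<not> C \<subseteq> K"
  proof
    assume "C \<subseteq> K"
    then have "K = insert (hd ps) C"
      using clique_eq_if_subset[OF C _ complete] clique_eq_if_subset[OF K _ complete_insert_hd]
      by blast
    then show False using \<open>K \<subseteq> V\<close> fresh hd_in_set[OF ps_ne] by blast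
  qed
  then obtain c where "c \<in> C - K" by blast
  then have "\<exists>s\<in>V - K. \<exists>x\<in>set ps. {s, x} \<in> E'"
    using hd_adjacent ends_subset_nonempty hd_in_set[OF ps_ne] by blast
  moreover have "V \<union> set ps - K = (V - K) \<union> set ps" using \<open>K \<subseteq> V\<close> fresh by auto
  ultimately show ?thesis
    using connected_in_Un_path[OF _ extended_path] by simp
qed

lemma extended_adjacent_ps_iff:
  assumes "i < length ps" "j < length ps" "i \<noteq> j"
  shows "{ps ! i, ps ! j} \<in> E' \<longleftrightarrow> j = Suc i \<or> i = Suc j"
proof (cases "i < j")
  case True
  then show ?thesis using extended_adjacent_ps[of i j] assms by auto
next
  case False
  then show ?thesis using extended_adjacent_ps[of j i] assms by (auto simp: insert_commute)
qed

lemma complete_path_edge: "Suc a < length ps \<Longrightarrow> complete_set (V \<union> set ps, E') {ps ! a, ps ! Suc a}"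
  using extended_adjacent_ps[of a "Suc a"] unfolding complete_set_def by (auto simp: insert_commute)

lemma clique_in_ps_is_path_edge:
  assumes K: "clique (V \<union> set ps, E') K" and "K \<subseteq> set ps"
  obtains a where "Suc a < length ps" and "K = {ps ! a, ps ! Suc a}"
proof -
  have index: "\<exists>i<length ps. v = ps ! i" if "v \<in> K" for v
    using that \<open>K \<subseteq> set ps\<close> by (metis in_set_conv_nth subsetD)
  have Kc: "\<And>u v. u \<in> K \<Longrightarrow> v \<in> K \<Longrightarrow> u \<noteq> v \<Longrightarrow> {u, v} \<in> E'"
    using clique_adjacent[OF K] by simp
  have "K \<noteq> {}" using clique_nonempty[OF K, of "hd ps"] ps_ne by simp
  then obtain p where "p \<in> K" by blast
  then obtain i where i: "i < length ps" "p = ps ! i" using index by blast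
  obtain w where "w \<in> set ps" "w \<noteq> p" "{p, w} \<in> E'"
  proof
    define j where "j = (if Suc i < length ps then Suc i else i - 1)"
    have "j < length ps" "j \<noteq> i" "j = Suc i \<or> i = Suc j" using i(1) length by (auto simp: j_def)
    then show "ps ! j \<in> set ps" "ps ! j \<noteq> p" "{p, ps ! j} \<in> E'"
      using i extended_adjacent_ps_iff[of i j] distinct by (auto simp: nth_eq_iff_index_eq)
  qed
  then have "\<exists>q\<in>K. q \<noteq> p" using clique_not_singleton[OF K \<open>p \<in> K\<close>, of w] by simp
  then obtain q j where q: "q \<in> K" "q \<noteq> p" and j: "j < length ps" "q = ps ! j"
    using index by blast
  have "i \<noteq> j" using q(2) i(2) j(2) by blast
  moreover have "{ps ! i, ps ! j} \<in> E'" using Kc[OF \<open>p \<in> K\<close> q(1) q(2)[symmetric]] i(2) j(2) by simp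
  ultimately have "j = Suc i \<or> i = Suc j" using extended_adjacent_ps_iff i(1) j(1) by blast
  define a where "a = min i j"
  have pq: "{p, q} = {ps ! a, ps ! Suc a}" "Suc a < length ps"
    using \<open>j = Suc i \<or> i = Suc j\<close> i j by (auto simp: a_def)
  have "K \<subseteq> {p, q}"
  proof
    fix z assume "z \<in> K"
    then obtain c where c: "c < length ps" "z = ps ! c" using index by blast
    show "z \<in> {p, q}"
    proof (rule ccontr)
      assume "z \<notin> {p, q}"
      then have "c \<noteq> i" "c \<noteq> j" using c i j by auto
      moreover have "{ps ! i, ps ! c} \<in> E'" "{ps ! j, ps ! c} \<in> E'"
        using Kc \<open>z \<in> K\<close> \<open>p \<in> K\<close> q \<open>z \<notin> {p, q}\<close> c i j by auto
      ultimately have "c = Suc i \<or> i = Suc c" "c = Suc j \<or> j = Suc c"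
        using extended_adjacent_ps_iff c(1) i(1) j(1) by simp_all
      then show False using \<open>c \<noteq> i\<close> \<open>c \<noteq> j\<close> \<open>j = Suc i \<or> i = Suc j\<close> by linarith
    qed
  qed
  then have "K = {ps ! a, ps ! Suc a}" using pq \<open>p \<in> K\<close> q by auto
  then show thesis using that pq(2) by blast
qed

lemma connected_extended_remove_path_edge:
  assumes "Suc a < length ps"
  shows "connected_in E' (V \<union> set ps - {ps ! a, ps ! Suc a})"
proof -
  obtain c c' where c: "c \<in> C" "c \<in> V" and c': "c' \<in> C'" "c' \<in> V"
    using ends_subset_nonempty by blast
  have "ps ! a \<in> set ps" "ps ! Suc a \<in> set ps" using assms by simp_all
  then have "ps ! a \<notin> V" "ps ! Suc a \<notin> V" using fresh by blast+
  then have "V \<union> set ps - {ps ! a, ps ! Suc a} = (V \<union> set (take a ps)) \<union> set (drop (Suc (Suc a)) ps)"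
    using set_remove_adjacent_distinct[OF distinct assms] by blast
  moreover have "connected_in E' (V \<union> set (take a ps))"
  proof (rule connected_in_Un_path[OF connected_extended_V successively_take[OF extended_path]])
    assume "take a ps \<noteq> []"
    then have "hd ps \<in> set (take a ps)" by (metis hd_in_set hd_take neq0_conv take_eq_Nil)
    then show "\<exists>s\<in>V. \<exists>x\<in>set (take a ps). {s, x} \<in> E'" using c hd_adjacent by blast
  qed
  moreover have "connected_in E' ((V \<union> set (take a ps)) \<union> set (drop (Suc (Suc a)) ps))"
  proof (rule connected_in_Un_path[OF calculation(2) successively_drop[OF extended_path]])
    assume "drop (Suc (Suc a)) ps \<noteq> []"
    then have "last ps \<in> set (drop (Suc (Suc a)) ps)" by (metis last_drop last_in_set drop_eq_Nil not_le)
    then show "\<exists>s\<in>V \<union> set (take a ps). \<exists>x\<in>set (drop (Suc (Suc a)) ps). {s, x} \<in> E'"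
      using c' last_adjacent by blast
  qed
  ultimately show ?thesis by simp
qed

lemma clique_meeting_ps_and_V:
  assumes K: "clique (V \<union> set ps, E') K" and "p \<in> K" "p \<in> set ps" and "z \<in> K" "z \<in> V"
  shows "K = insert (hd ps) C \<or> K = insert (last ps) C'"
proof -
  have adjacent: "{u, v} \<in> E'" if "u \<in> K" "v \<in> K" "u \<noteq> v" for u v
    using clique_adjacent[OF K that] by simp
  have "p \<noteq> z" using assms(3,5) fresh by blast
  then have pz: "(p = hd ps \<and> z \<in> C) \<or> (p = last ps \<and> z \<in> C')"
    using adjacent[OF assms(2,4)] extended_adjacent_ps_V[OF assms(3,5)] by simp
  have K_V: "w \<in> V" if "w \<in> K" "w \<noteq> p" for w
  proof (rule ccontr)
    assume "w \<notin> V"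
    then have "w \<in> set ps" "w \<noteq> z" using that clique_subset[OF K] assms(5) by auto
    then have "(w = hd ps \<and> z \<in> C) \<or> (w = last ps \<and> z \<in> C')"
      using adjacent[OF that(1) assms(4)] extended_adjacent_ps_V[OF _ assms(5)] by simp
    then show False using pz that(2) disjoint by blast
  qed
  have "{w \<in> V. {p, w} \<in> E'} \<subseteq> (if p = hd ps then C else C')"
    using extended_adjacent_ps_V[OF assms(3)] hd_ne_last by auto
  then have K_sub: "K \<subseteq> insert p (if p = hd ps then C else C')"
    using adjacent \<open>p \<in> K\<close> K_V by blast
  from pz show ?thesis
  proof
    assume "p = hd ps \<and> z \<in> C"
    then have "K \<subseteq> insert (hd ps) C" using K_sub by simp
    then show ?thesis using clique_eq_if_subset[OF K _ complete_insert_hd] by blast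
  next
    assume "p = last ps \<and> z \<in> C'"
    then have "K \<subseteq> insert (last ps) C'" using K_sub hd_ne_last by simp
    then show ?thesis using clique_eq_if_subset[OF K _ complete_insert_last] by blast
  qed
qed

lemma connected_extended_remove_end:
  assumes D: "clique (V, E) D" and "x \<in> set ps"
    and path: "successively (\<lambda>x y. {x, y} \<in> E') qs" and qs: "set qs = set ps - {x}"
    and attached: "\<exists>s\<in>V - D. \<exists>y\<in>set qs. {s, y} \<in> E'"
  shows "connected_in E' (V \<union> set ps - insert x D)"
proof -
  have "V \<union> set ps - insert x D = (V - D) \<union> set qs"
    using qs \<open>x \<in> set ps\<close> fresh clique_subset[OF D] by auto
  moreover have "connected_in E' (V - D)"
    using robust D connected_in_mono[OF _ edges_subset_extended] unfolding clique_robust_def by simp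
  ultimately show ?thesis
    using connected_in_Un_path[OF _ path] attached by simp
qed

lemma connected_extended_remove_hd_clique: "connected_in E' (V \<union> set ps - insert (hd ps) C)"
proof -
  have "tl ps \<noteq> []" using length by (cases ps) auto
  then have "last ps \<in> set (tl ps)" by (metis last_in_set last_tl)
  moreover have "successively (\<lambda>x y. {x, y} \<in> E') (tl ps)"
    using successively_drop[OF extended_path, of 1] by (simp add: drop_Suc)
  moreover obtain c' where "c' \<in> C'" "c' \<in> V - C" using ends_subset_nonempty disjoint by blast
  ultimately show ?thesis
    using connected_extended_remove_end[OF C hd_in_set[OF ps_ne] _ set_tl_distinct[OF distinct]]
      last_adjacent by blast
qed

lemma connected_extended_remove_last_clique: "connected_in E' (V \<union> set ps - insert (last ps) C')"
proof -
  have butlast: "butlast ps = take (length ps - 1) ps" "0 < length ps - 1"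
    using length by (simp_all add: butlast_conv_take)
  then have "hd ps \<in> set (butlast ps)" by (metis hd_in_set hd_take take_eq_Nil not_gr0 ps_ne)
  moreover have "successively (\<lambda>x y. {x, y} \<in> E') (butlast ps)"
    using successively_take[OF extended_path] butlast(1) by metis
  moreover obtain c where "c \<in> C" "c \<in> V - C'" using ends_subset_nonempty disjoint by blast
  ultimately show ?thesis
    using connected_extended_remove_end[OF C' last_in_set[OF ps_ne] _ set_butlast_distinct[OF distinct]]
      hd_adjacent by blast
qed

lemma clique_robust_extended: "clique_robust (V \<union> set ps, E')"
proof -
  have "e \<subseteq> V \<union> set ps" if "e \<in> E'" for e
    using that edges_in_V ends_subset_nonempty(1,3) hd_in_set[OF ps_ne] last_in_set[OF ps_ne]
    unfolding extended_edges by auto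
  moreover obtain c where "c \<in> C" "c \<in> V" using ends_subset_nonempty by blast
  then have "connected_in E' (V \<union> set ps)"
    using connected_in_Un_path[OF connected_extended_V extended_path] hd_adjacent hd_in_set[OF ps_ne]
    by blast
  moreover have "connected_in E' (V \<union> set ps - K)" if K: "clique (V \<union> set ps, E') K" for K
  proof -
    consider "K \<subseteq> V" | "K \<subseteq> set ps" | p z where "p \<in> K" "p \<in> set ps" "z \<in> K" "z \<in> V"
      using clique_subset[OF K] by auto
    then show ?thesis
    proof cases
      case 1
      then show ?thesis by (rule connected_extended_remove_clique_in_V[OF K])
    next
      case 2
      then obtain a where "Suc a < length ps" "K = {ps ! a, ps ! Suc a}"
        by (rule clique_in_ps_is_path_edge[OF K])
      then show ?thesis using connected_extended_remove_path_edge by simp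
    next
      case 3
      then show ?thesis
        using clique_meeting_ps_and_V[OF K] connected_extended_remove_hd_clique
          connected_extended_remove_last_clique by blast
    qed
  qed
  ultimately show ?thesis unfolding clique_robust_def by simp
qed

end

section \<open>Gates are atoms\<close>

lemma clique_robust_gate: "gate H \<Longrightarrow> clique_robust H"
proof (induction H rule: gate.induct)
  case (cycle xs E)
  then interpret cycle_graph xs E by unfold_locales
  show ?case using cycle by (intro clique_robust_cycle)
next
  case (extend V E C C' ps E')
  then interpret gate_extension V E C C' ps E' by unfold_locales
  show ?case by (rule clique_robust_extended)
qed

lemma atom_of_exists:
  assumes "finite (fst G)" and "S \<subseteq> fst G" and "atom (induced G S)"
  shows "\<exists>A. atom_of G A \<and> S \<subseteq> A"
proof -
  define \<A> where "\<A> = {B. S \<subseteq> B \<and> B \<subseteq> fst G \<and> atom (induced G B)}"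
  have "finite \<A>" unfolding \<A>_def using assms(1) by (simp add: finite_subset[of _ "Pow (fst G)"] subset_eq)
  moreover have "S \<in> \<A>" unfolding \<A>_def using assms(2,3) by simp
  ultimately obtain A where A: "A \<in> \<A>" "\<forall>B\<in>\<A>. A \<subseteq> B \<longrightarrow> A = B"
    using finite_has_maximal[of \<A>] by blast
  then have "atom_of G A" unfolding atom_of_def \<A>_def by blast
  then show ?thesis using A(1) unfolding \<A>_def by blast
qed

theorem lemma12:
  fixes G H :: "'a graph" and k :: nat
  assumes "graph G" and "k_gate k H" and "induced_subgraph H G"
  shows "\<exists>A. atom_of G A \<and> induced_subgraph H (induced G A)"
proof -
  have H: "H = induced G (fst H)"
    using assms(3) unfolding induced_subgraph_def induced_def by (metis prod.collapse)
  have "atom (induced G (fst H))"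
    using assms(2) atom_if_clique_robust clique_robust_gate H unfolding k_gate_def by metis
  then obtain A where "atom_of G A" and "fst H \<subseteq> A"
    using atom_of_exists assms(1,3) unfolding graph_def induced_subgraph_def by metis
  moreover have "induced_subgraph H (induced G A)"
    using \<open>fst H \<subseteq> A\<close> assms(3) unfolding induced_subgraph_def induced_def by auto
  ultimately show ?thesis by blast
qed

end
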